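(* In the free group $\mathbb{F}_2$ on $a,b$, set $a_0:=b^{-1}$, $b_0:=aba^{-1}$ and recursively $a_n:=a_{n-1}b_{n-1}$, $b_n:=a_{n-1}^{-1}b_{n-1}^{-1}$ for $n\ge1$. Let $\sigma,\tau\in\mathrm{Aut}(\mathbb{F}_2)$ be defined by $\sigma(a)=a^{-1},\sigma(b)=b^{-1}$ and $\tau(a)=a,\tau(b)=b^{-1}$. Let $n\in\mathbb{N}$. Then: (1) if $n\equiv0\pmod3$, then $a\,\sigma(a_n)\,a^{-1}=b_n$ (and so $a_n=a\,\sigma(b_n)\,a^{-1}$); (2) if $n\equiv1\pmod3$, then $\tau(a_n)=b_n$ (and so $\tau(b_n)=a_n$); (3) if $n\equiv2\pmod3$, then $\tau(a_n)=b_n^{-1}$. *)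

theory Defs
  imports Main
begin

text \<open>The free group F2 on generators a, b, modelled by freely reduced words.
  A letter is a pair (e, g): g = False is the generator a, g = True is b;
  e = True means the inverse of the generator.\<close>

type_synonym letter = "bool \<times> bool"
type_synonym word = "letter list"

definition inv_letter :: "letter \<Rightarrow> letter" where
  "inv_letter l = (\<not> fst l, snd l)"

definition red_cons :: "letter \<Rightarrow> word \<Rightarrow> word" where
  "red_cons x ys = (case ys of [] \<Rightarrow> [x]
     | y # ys' \<Rightarrow> (if y = inv_letter x then ys' else x # ys))"

definition red :: "word \<Rightarrow> word" where
  "red xs = foldr red_cons xs []"

definition reduced :: "word \<Rightarrow> bool" where
  "reduced xs \<longleftrightarrow> (\<forall>i. Suc i < length xs \<longrightarrow> xs ! Suc i \<noteq> inv_letter (xs ! i))"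

definition fmul :: "word \<Rightarrow> word \<Rightarrow> word" (infixl "\<cdot>" 70) where
  "x \<cdot> y = red (x @ y)"

definition finv :: "word \<Rightarrow> word" where
  "finv x = rev (map inv_letter x)"

definition gen_a :: word where "gen_a = [(False, False)]"
definition gen_b :: word where "gen_b = [(False, True)]"

definition hom_ext :: "word \<Rightarrow> word \<Rightarrow> word \<Rightarrow> word" where
  "hom_ext ia ib w = red (concat (map (\<lambda>l. let v = (if snd l then ib else ia)
                                           in if fst l then finv v else v) w))"

definition sigma :: "word \<Rightarrow> word" where
  "sigma = hom_ext (finv gen_a) (finv gen_b)"

definition tau :: "word \<Rightarrow> word" where
  "tau = hom_ext gen_a (finv gen_b)"

fun ab_seq :: "nat \<Rightarrow> word \<times> word" where
  "ab_seq 0 = (finv gen_b, gen_a \<cdot> gen_b \<cdot> finv gen_a)"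
| "ab_seq (Suc n) = (let (x, y) = ab_seq n in (x \<cdot> y, finv x \<cdot> finv y))"

definition a_seq :: "nat \<Rightarrow> word" where "a_seq n = fst (ab_seq n)"
definition b_seq :: "nat \<Rightarrow> word" where "b_seq n = snd (ab_seq n)"

end

theory Submission
  imports Defs
begin

text \<open>Let \<psi> be an endomorphism of F2 and call a pair (x, y) twisted of type 0, 1 or 2 for \<psi> if
  \<psi> x = x\<inverse>, \<psi> y = y\<inverse>, resp. \<psi> x = y, \<psi> y = x, resp. \<psi> x = y\<inverse>, \<psi> y = x\<inverse>.
  The recursion (x, y) \<mapsto> (x y, x\<inverse> y\<inverse>) raises the type by one modulo 3; e.g. from
  type 1 we get \<psi>(x y) = y x = (x\<inverse> y\<inverse>)\<inverse>.  The pair (a_0, b_0) has type 0 for \<tau>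
  and type 1 for the automorphism x \<mapsto> a \<sigma>(x) a\<inverse>, which gives the three claims.\<close>

lemma inv_letter_inv_letter [simp]: "inv_letter (inv_letter x) = x"
  by (simp add: inv_letter_def)

lemma inv_letter_neq: "inv_letter x \<noteq> x"
  by (simp add: inv_letter_def prod_eq_iff)

lemma finv_Cons: "finv (x # xs) = finv xs @ [inv_letter x]"
  by (simp add: finv_def)

lemma finv_finv [simp]: "finv (finv x) = x"
  by (simp add: finv_def rev_map comp_def)

lemma finv_eq_Nil_iff [simp]: "finv xs = [] \<longleftrightarrow> xs = []"
  by (simp add: finv_def)

lemma last_finv: "xs \<noteq> [] \<Longrightarrow> last (finv xs) = inv_letter (hd xs)"
  by (cases xs) (auto simp: finv_def)

lemma reduced_Nil [simp]: "reduced []"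
  and reduced_singleton [simp]: "reduced [x]"
  by (simp_all add: reduced_def)

lemma reduced_Cons_Cons [simp]:
  "reduced (x # y # ys) \<longleftrightarrow> y \<noteq> inv_letter x \<and> reduced (y # ys)"
  unfolding reduced_def by (auto simp: nth_Cons split: nat.splits)

lemma reduced_Cons: "reduced (x # xs) \<longleftrightarrow> reduced xs \<and> (xs \<noteq> [] \<longrightarrow> hd xs \<noteq> inv_letter x)"
  by (cases xs) auto

lemma reduced_ConsD: "reduced (x # xs) \<Longrightarrow> reduced xs"
  by (simp add: reduced_Cons)

lemma reduced_snoc:
  "reduced (xs @ [y]) \<longleftrightarrow> reduced xs \<and> (xs \<noteq> [] \<longrightarrow> y \<noteq> inv_letter (last xs))"
proof (induction xs)
  case (Cons x xs)
  then show ?case by (cases xs) auto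
qed simp

lemma reduced_finv: "reduced xs \<Longrightarrow> reduced (finv xs)"
  by (induction xs) (auto simp: finv_Cons reduced_snoc reduced_Cons last_finv, simp add: finv_def)

lemma reduced_red_cons: "reduced z \<Longrightarrow> reduced (red_cons x z)"
  by (cases z) (auto simp: red_cons_def reduced_Cons dest: reduced_ConsD)

lemma reduced_foldr_red_cons: "reduced z \<Longrightarrow> reduced (foldr red_cons xs z)"
  by (induction xs) (auto intro: reduced_red_cons)

lemma reduced_red: "reduced (red xs)"
  by (simp add: red_def reduced_foldr_red_cons)

lemma red_Cons: "red (x # xs) = red_cons x (red xs)"
  by (simp add: red_def)

lemma red_reduced: "reduced z \<Longrightarrow> red z = z"
proof (induction z)
  case (Cons y z)
  then show ?case
    by (cases z) (auto simp: red_Cons red_cons_def dest: reduced_ConsD)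
qed (simp add: red_def)

lemma red_red [simp]: "red (red x) = red x"
  by (simp add: red_reduced reduced_red)

lemma red_cons_inv_letter: "reduced z \<Longrightarrow> red_cons x (red_cons (inv_letter x) z) = z"
  by (cases z) (auto simp: red_cons_def inv_letter_neq reduced_Cons split: list.split)

lemma foldr_red_cons_red_cons:
  "reduced z \<Longrightarrow> foldr red_cons (red_cons x w) z = red_cons x (foldr red_cons w z)"
proof (cases w)
  case (Cons y w')
  assume z: "reduced z"
  show ?thesis
  proof (cases "y = inv_letter x")
    case True
    then show ?thesis
      using Cons red_cons_inv_letter[OF reduced_foldr_red_cons[OF z, of w']]
      by (simp add: red_cons_def)
  qed (use Cons in \<open>simp add: red_cons_def\<close>)
qed (simp add: red_cons_def)

lemma red_append: "red (xs @ ys) = foldr red_cons xs (red ys)"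
  by (simp add: red_def)

lemma red_append_red_left [simp]: "red (red xs @ ys) = red (xs @ ys)"
proof -
  have "foldr red_cons (red xs) z = foldr red_cons xs z" if "reduced z" for z
    using that by (induction xs) (simp_all add: red_def foldr_red_cons_red_cons)
  then show ?thesis by (simp add: red_append reduced_red)
qed

lemma red_append_red_right [simp]: "red (xs @ red ys) = red (xs @ ys)"
  by (simp add: red_append)

lemma red_append_finv: "red (xs @ finv xs @ ys) = red ys"
proof -
  have "foldr red_cons (xs @ finv xs) z = z" if "reduced z" for z
    using that
    by (induction xs arbitrary: z)
      (simp_all add: finv_Cons reduced_red_cons red_cons_inv_letter, simp add: finv_def)
  then show ?thesis by (simp add: red_append reduced_red)
qed

lemma fmul_assoc: "x \<cdot> y \<cdot> z = x \<cdot> (y \<cdot> z)"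
  by (simp add: fmul_def)

lemma reduced_fmul: "reduced (x \<cdot> y)"
  by (simp add: fmul_def reduced_red)

lemma fmul_Nil_right: "reduced x \<Longrightarrow> x \<cdot> [] = x"
  and fmul_Nil_left: "reduced x \<Longrightarrow> [] \<cdot> x = x"
  by (simp_all add: fmul_def red_reduced)

lemma fmul_Nil_middle: "x \<cdot> [] \<cdot> z = x \<cdot> z"
  by (simp add: fmul_def)

lemma fmul_finv_right: "x \<cdot> finv x = []"
  using red_append_finv[of x "[]"] by (simp add: fmul_def red_def)

lemma fmul_finv_left: "finv x \<cdot> x = []"
  using fmul_finv_right[of "finv x"] by simp

lemma finv_unique:
  assumes "reduced v" "reduced u" "v \<cdot> u = []"
  shows "v = finv u"
proof -
  have "v = v \<cdot> (u \<cdot> finv u)" using assms by (simp add: fmul_finv_right fmul_Nil_right)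
  also have "\<dots> = finv u" using assms by (simp add: fmul_assoc[symmetric] fmul_Nil_left reduced_finv)
  finally show ?thesis .
qed

lemma finv_fmul: "finv (x \<cdot> y) = finv y \<cdot> finv x"
proof -
  have "(finv y \<cdot> finv x) \<cdot> (x \<cdot> y) = finv y \<cdot> (finv x \<cdot> x) \<cdot> y"
    by (simp add: fmul_assoc)
  also have "\<dots> = []" by (simp add: fmul_finv_left fmul_Nil_middle)
  finally show ?thesis by (metis finv_unique reduced_fmul finv_finv)
qed

text \<open>The substitution g is compatible with inversion, so it sends cancelling pairs of
  letters to cancelling pairs of words; hence it commutes with free reduction.\<close>

lemma red_concat_map_red:
  assumes g: "\<And>l. g (inv_letter l) = finv (g l)"
  shows "red (concat (map g (red w))) = red (concat (map g w))"
proof (induction w)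
  case (Cons x w)
  have "red (concat (map g (red_cons x u))) = red (g x @ concat (map g u))" for u
    by (cases u) (auto simp: red_cons_def g red_append_finv)
  then have "red (concat (map g (red (x # w)))) = red (g x @ red (concat (map g (red w))))"
    by (simp add: red_Cons)
  then show ?case by (simp add: Cons.IH)
qed (simp add: red_def)

lemma hom_ext_fmul: "hom_ext ia ib (x \<cdot> y) = hom_ext ia ib x \<cdot> hom_ext ia ib y"
proof -
  define g where "g l = (let v = if snd l then ib else ia in if fst l then finv v else v)"
    for l :: letter
  have "g (inv_letter l) = finv (g l)" for l
    by (auto simp: g_def inv_letter_def Let_def)
  then have "red (concat (map g (red (x @ y)))) = red (red (concat (map g x)) @ red (concat (map g y)))"
    by (simp add: red_concat_map_red)
  then show ?thesis by (simp add: hom_ext_def fmul_def g_def[abs_def])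
qed

lemma hom_ext_finv: "hom_ext ia ib (finv x) = finv (hom_ext ia ib x)"
proof (rule finv_unique)
  show "hom_ext ia ib (finv x) \<cdot> hom_ext ia ib x = []"
    by (simp add: hom_ext_fmul[symmetric] fmul_finv_left, simp add: hom_ext_def red_def)
qed (simp_all add: hom_ext_def reduced_red)

definition conjugate :: "word \<Rightarrow> word \<Rightarrow> word" where
  "conjugate g x = g \<cdot> x \<cdot> finv g"

lemma conjugate_fmul: "conjugate g (x \<cdot> y) = conjugate g x \<cdot> conjugate g y"
proof -
  have "conjugate g x \<cdot> conjugate g y = g \<cdot> x \<cdot> (finv g \<cdot> g) \<cdot> y \<cdot> finv g"
    by (simp add: conjugate_def fmul_assoc)
  then show ?thesis by (simp add: conjugate_def fmul_finv_left fmul_Nil_middle fmul_assoc[symmetric])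
qed

lemma conjugate_finv: "conjugate g (finv x) = finv (conjugate g x)"
  by (simp add: conjugate_def finv_fmul fmul_assoc)

definition twisted :: "nat \<Rightarrow> (word \<Rightarrow> word) \<Rightarrow> word \<times> word \<Rightarrow> bool" where
  "twisted k \<psi> p \<longleftrightarrow> (case p of (x, y) \<Rightarrow>
     (k mod 3 = 0 \<longrightarrow> \<psi> x = finv x \<and> \<psi> y = finv y) \<and>
     (k mod 3 = 1 \<longrightarrow> \<psi> x = y \<and> \<psi> y = x) \<and>
     (k mod 3 = 2 \<longrightarrow> \<psi> x = finv y \<and> \<psi> y = finv x))"

lemma twisted_ab_seq:
  assumes fmul: "\<And>x y. \<psi> (x \<cdot> y) = \<psi> x \<cdot> \<psi> y"
    and finv: "\<And>x. \<psi> (finv x) = finv (\<psi> x)"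
    and base: "twisted k \<psi> (ab_seq 0)"
  shows "twisted (k + n) \<psi> (ab_seq n)"
proof (induction n)
  case (Suc n)
  obtain x y where xy: "ab_seq n = (x, y)" by fastforce
  have "(k + n) mod 3 < 3" by simp
  moreover have "Suc (k + n) mod 3 = (if (k + n) mod 3 = 2 then 0 else Suc ((k + n) mod 3))"
    by (simp add: mod_Suc)
  ultimately show ?case using Suc.IH
    by (auto simp: twisted_def xy fmul finv finv_fmul)
qed (use base in simp)

theorem lemma2p3:
  fixes n :: nat
  shows "(n mod 3 = 0 \<longrightarrow>
            gen_a \<cdot> sigma (a_seq n) \<cdot> finv gen_a = b_seq n \<and>
            a_seq n = gen_a \<cdot> sigma (b_seq n) \<cdot> finv gen_a)
       \<and> (n mod 3 = 1 \<longrightarrow> tau (a_seq n) = b_seq n \<and> tau (b_seq n) = a_seq n)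
       \<and> (n mod 3 = 2 \<longrightarrow> tau (a_seq n) = finv (b_seq n))"
proof -
  let ?\<phi> = "\<lambda>x. conjugate gen_a (sigma x)"
  have "twisted 0 tau (ab_seq 0)" and "twisted 1 ?\<phi> (ab_seq 0)"
    by (simp_all add: twisted_def tau_def sigma_def conjugate_def hom_ext_def fmul_def red_def
        red_cons_def finv_def inv_letter_def gen_a_def gen_b_def)
  then have "twisted n tau (ab_seq n)" and "twisted (Suc n) ?\<phi> (ab_seq n)"
    using twisted_ab_seq[of tau 0 n] twisted_ab_seq[of ?\<phi> 1 n]
    by (simp_all add: tau_def sigma_def hom_ext_fmul hom_ext_finv conjugate_fmul conjugate_finv)
  then show ?thesis
    by (auto simp: twisted_def a_seq_def b_seq_def conjugate_def mod_Suc split: prod.splits)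
qed

end
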